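(* There is a constant $C_0\ge 1$, depending only on $\gamma_2$ and $\varkappa$, such that if the constant $C$ in the definition of the weights $e_{\gamma,\varkappa}$ satisfies $C\ge C_0$, then the following hold, where $\gamma=(\gamma_1,\gamma_2)\ge(0,0)$ and $\varkappa\ge 0$. (i) If $\gamma_1\ge 0$ and $\gamma_2-\varkappa\ge 0$, then $$e_{\gamma,\varkappa}(a,b)\le e_{\gamma,0}(a,c)\,e_{\gamma,\varkappa}(c,b)\qquad\text{for all } a,b,c\in\mathbb Z^{d_*}.$$ (ii) If $\tilde\gamma\in\mathbb R^2$ satisfies $-\gamma\le\tilde\gamma\le\gamma$ (componentwise), then $$e_{\tilde\gamma,\varkappa}(a,0)\le e_{\gamma,\varkappa}(a,b)\,e_{\tilde\gamma,\varkappa}(b,0)\qquad\text{for all } a,b\in\mathbb Z^{d_*}.$$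
   Context: Let $d_*\ge1$. For $a\in\mathbb Z^{d_*}$, $|a|$ is the Euclidean norm and $\langle a\rangle=\max(|a|,1)$. For $a,b\in\mathbb Z^{d_*}$ put $[a-b]=\min(|a-b|,|a+b|)$. Pairs in $\mathbb R^2$ are ordered componentwise: $(x_1,x_2)\le(y_1,y_2)$ iff $x_1\le y_1$ and $x_2\le y_2$. For $\gamma=(\gamma_1,\gamma_2)\in\mathbb R^2$ and $\varkappa\ge0$, with a fixed constant $C\ge1$, define $$e_{\gamma,\varkappa}(a,b)=C\,e^{\gamma_1[a-b]}\max([a-b],1)^{\gamma_2}\min(\langle a\rangle,\langle b\rangle)^{\varkappa}.$$ *)

theory Defs
  imports "HOL-Analysis.Analysis"
begin

text \<open>Lattice points of Z^d are vectors of type int ^ 'd (the finite index type 'd has CARD('d) = d).\<close>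

definition znorm :: "int ^ 'd \<Rightarrow> real" where
  "znorm a = sqrt (\<Sum>i\<in>UNIV. (real_of_int (a $ i))\<^sup>2)"

definition zbr :: "int ^ 'd \<Rightarrow> real" where
  "zbr a = max (znorm a) 1"

definition zdist :: "int ^ 'd \<Rightarrow> int ^ 'd \<Rightarrow> real" where
  "zdist a b = min (znorm (a - b)) (znorm (a + b))"

definition ew :: "real \<Rightarrow> real \<Rightarrow> real \<Rightarrow> real \<Rightarrow> int ^ 'd \<Rightarrow> int ^ 'd \<Rightarrow> real" where
  "ew C g1 g2 k a b =
     C * exp (g1 * zdist a b) * (max (zdist a b) 1) powr g2 * (min (zbr a) (zbr b)) powr k"

end

theory Submission
  imports Defs
begin

text \<open>
  Each inequality splits into one for the exponential factor and one for the polynomial factors.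
  The former is the triangle inequality for \<open>[a - b] = min |a - b| |a + b|\<close>, together with
  \<open>||a| - |b|| \<le> [a - b]\<close> in (ii). The latter follows from Peetre's inequality
  \<open>\<langle>a\<rangle> \<le> 2 \<langle>c\<rangle> max [a - c] 1\<close> and from \<open>max [a - b] 1 \<le> 2 max (max [a - c] 1) (max [c - b] 1)\<close>.
  Only powers of 2 are lost, so \<open>C\<^sub>0 = 2\<^bsup>\<gamma>\<^sub>2 + \<varkappa>\<^esup>\<close> works.
\<close>

definition real_of_int_vec :: "int ^ 'd \<Rightarrow> real ^ 'd" where
  "real_of_int_vec a = (\<chi> i. real_of_int (a $ i))"

lemma real_of_int_vec_diff: "real_of_int_vec (a - b) = real_of_int_vec a - real_of_int_vec b"
  and real_of_int_vec_add: "real_of_int_vec (a + b) = real_of_int_vec a + real_of_int_vec b"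
  by (auto simp: real_of_int_vec_def vec_eq_iff)

lemma znorm_eq_norm: "znorm a = norm (real_of_int_vec a)"
  by (simp add: znorm_def real_of_int_vec_def norm_vec_def L2_set_def)

lemma zdist_eq_min_norm:
  "zdist a b = min (norm (real_of_int_vec a - real_of_int_vec b))
                   (norm (real_of_int_vec a + real_of_int_vec b))"
  by (simp add: zdist_def znorm_eq_norm real_of_int_vec_diff real_of_int_vec_add)

lemma zdist_nonneg: "zdist a b \<ge> 0"
  by (simp add: zdist_eq_min_norm)

lemma zdist_commute: "zdist a b = zdist b a"
  by (simp add: zdist_eq_min_norm norm_minus_commute add.commute)

lemma zdist_zero_right: "zdist a 0 = znorm a"
  by (simp add: zdist_def)

lemma min_norm_diff_add_triangle:
  fixes x y z :: "'a::real_normed_vector"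
  shows "min (norm (x - y)) (norm (x + y))
    \<le> min (norm (x - z)) (norm (x + z)) + min (norm (z - y)) (norm (z + y))"
  using norm_triangle_ineq[of "x - z" "z - y"] norm_triangle_ineq[of "x - z" "z + y"]
    norm_triangle_ineq4[of "x + z" "z - y"] norm_triangle_ineq4[of "x + z" "z + y"]
  by (simp add: algebra_simps)

lemma zdist_triangle: "zdist a b \<le> zdist a c + zdist c b"
  unfolding zdist_eq_min_norm by (rule min_norm_diff_add_triangle)

lemma znorm_le_znorm_add_zdist: "znorm b \<le> znorm c + zdist c b"
proof -
  have "norm y \<le> norm z + norm (z - y)" "norm y \<le> norm z + norm (z + y)" for y z :: "real ^ 'd"
    using norm_triangle_ineq2[of y z] norm_triangle_ineq3[of y "-z"]
    by (simp_all add: norm_minus_commute add.commute)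
  then show ?thesis
    unfolding zdist_eq_min_norm znorm_eq_norm by (smt (verit))
qed

lemma abs_znorm_diff_le_zdist: "\<bar>znorm a - znorm b\<bar> \<le> zdist a b"
  using znorm_le_znorm_add_zdist[of a b] znorm_le_znorm_add_zdist[of b a] zdist_commute[of a b]
  by linarith

lemma zbr_ge_1: "zbr a \<ge> 1"
  by (simp add: zbr_def)

lemma zbr_zero: "zbr 0 = 1"
  by (simp add: zbr_def znorm_def)

lemma add_le_2_mult:
  fixes x y :: real
  assumes "1 \<le> x" "1 \<le> y"
  shows "x + y \<le> 2 * x * y"
  using mult_mono[of 0 "x - 1" 0 "y - 1"] assms by (simp add: algebra_simps)

lemma zbr_le_2_mult_zbr: "zbr b \<le> 2 * zbr c * max (zdist c b) 1"
proof -
  have "zbr b \<le> zbr c + max (zdist c b) 1"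
    using znorm_le_znorm_add_zdist[of b c] by (auto simp: zbr_def max_def)
  then show ?thesis
    using add_le_2_mult[OF zbr_ge_1[of c], of "max (zdist c b) 1"] by linarith
qed

lemma max_zdist_1_le_2_max: "max (zdist a b) 1 \<le> 2 * max (max (zdist a c) 1) (max (zdist c b) 1)"
  using zdist_triangle[of a b c] zdist_nonneg[of a c] zdist_nonneg[of c b] by (auto simp: max_def)

text \<open>
  \<open>min A B \<le> 2 min D B min P Q\<close>, and since \<open>k \<le> g\<close> the factor \<open>(min P Q)\<^sup>k\<close> is absorbed
  into \<open>(max P Q * min P Q)\<^sup>g = (P Q)\<^sup>g\<close>.
\<close>

lemma powr_polynomial_weight_split:
  fixes A B D P Q R g k :: real
  assumes "1 \<le> A" "1 \<le> B" "1 \<le> D" "1 \<le> P" "1 \<le> Q" "1 \<le> R"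
    and "R \<le> 2 * max P Q" "A \<le> 2 * D * P" "B \<le> 2 * D * Q"
    and "0 \<le> k" "k \<le> g"
  shows "R powr g * min A B powr k \<le> 2 powr (g + k) * (P powr g * (Q powr g * min D B powr k))"
proof -
  define X where "X = max P Q"
  define Y where "Y = min P Q"
  define m where "m = min D B"
  have X1: "1 \<le> X" and Y1: "1 \<le> Y" and m1: "1 \<le> m"
    using assms by (auto simp: X_def Y_def m_def)
  have min_AB: "min A B \<le> 2 * m * Y"
  proof (cases "B \<le> D")
    case True
    then have "m = B" by (simp add: m_def)
    moreover have "B \<le> 2 * B * Y"
      using Y1 assms(2) mult_mono[of 1 2 1 "B * Y"] by (simp add: algebra_simps)
    ultimately show ?thesis by (simp add: min_le_iff_disj)
  next
    case False
    then show ?thesis using assms(8,9) by (auto simp: m_def Y_def min_def)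
  qed
  have "R powr g * min A B powr k \<le> (2 * X) powr g * (2 * m * Y) powr k"
    using assms X1 Y1 m1 min_AB by (intro mult_mono powr_mono2) (auto simp: X_def)
  also have "\<dots> = (2 powr g * 2 powr k) * (X powr g * (m powr k * Y powr k))"
    using X1 Y1 m1 by (simp add: powr_mult)
  also have "\<dots> \<le> (2 powr g * 2 powr k) * (X powr g * (m powr k * Y powr g))"
    using Y1 assms(11) by (intro mult_left_mono powr_mono) auto
  also have "X powr g * (m powr k * Y powr g) = (X * Y) powr g * m powr k"
    using X1 Y1 by (simp add: powr_mult)
  also have "X * Y = P * Q"
    by (simp add: X_def Y_def max_def min_def)
  also have "(2 powr g * 2 powr k) * ((P * Q) powr g * m powr k)
      = 2 powr (g + k) * (P powr g * (Q powr g * min D B powr k))"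
    using assms by (simp add: powr_add powr_mult m_def)
  finally show ?thesis .
qed

lemma powr_le_powr_of_comparable:
  fixes x y t g h :: real
  assumes "0 < x" "0 < y" "y \<le> t * x" "x \<le> t * y" "1 \<le> t" "\<bar>h\<bar> \<le> g"
  shows "x powr h \<le> t powr g * y powr h"
proof (cases "h \<ge> 0")
  case True
  have "x powr h \<le> (t * y) powr h"
    using assms True by (intro powr_mono2) auto
  also have "\<dots> = t powr h * y powr h"
    using assms by (simp add: powr_mult)
  also have "\<dots> \<le> t powr g * y powr h"
    using assms by (intro mult_right_mono powr_mono) auto
  finally show ?thesis .
next
  case False
  have "y / t \<le> x"
    using assms by (simp add: divide_le_eq mult.commute)
  then have "x powr h \<le> (y / t) powr h"
    using assms False by (intro powr_mono2') auto
  also have "\<dots> = t powr (- h) * y powr h"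
    using assms by (simp add: powr_divide powr_minus_divide)
  also have "\<dots> \<le> t powr g * y powr h"
    using assms by (intro mult_right_mono powr_mono) auto
  finally show ?thesis .
qed

lemma ew_submultiplicative:
  fixes a b c :: "int ^ 'd"
  assumes C: "2 powr (g2 + k) \<le> C" and "0 \<le> g1" "0 \<le> k" "k \<le> g2"
  shows "ew C g1 g2 k a b \<le> ew C g1 g2 0 a c * ew C g1 g2 k c b"
proof -
  define R where "R = max (zdist a b) 1"
  define P where "P = max (zdist a c) 1"
  define Q where "Q = max (zdist c b) 1"
  define W where "W = P powr g2 * (Q powr g2 * min (zbr c) (zbr b) powr k)"
  have C_pos: "0 < C"
    using C by (smt (verit) powr_gt_zero)
  have poly: "R powr g2 * min (zbr a) (zbr b) powr k \<le> C * W"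
  proof -
    have "zbr a \<le> 2 * zbr c * P"
      using zbr_le_2_mult_zbr[of a c] by (simp add: P_def zdist_commute[of c a])
    then have "R powr g2 * min (zbr a) (zbr b) powr k \<le> 2 powr (g2 + k) * W"
      unfolding R_def W_def using assms(3,4) zbr_ge_1 zbr_le_2_mult_zbr[of b c] max_zdist_1_le_2_max
      by (intro powr_polynomial_weight_split) (auto simp: P_def Q_def)
    also have "\<dots> \<le> C * W"
      using C by (intro mult_right_mono) (auto simp: W_def)
    finally show ?thesis .
  qed
  have expo: "exp (g1 * zdist a b) \<le> exp (g1 * zdist a c) * exp (g1 * zdist c b)"
    using zdist_triangle[of a b c] assms(2) by (simp add: mult_left_mono flip: exp_add distrib_left)
  have "ew C g1 g2 k a b = C * exp (g1 * zdist a b) * (R powr g2 * min (zbr a) (zbr b) powr k)"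
    by (simp add: ew_def R_def)
  also have "\<dots> \<le> C * (exp (g1 * zdist a c) * exp (g1 * zdist c b)) * (C * W)"
    by (rule mult_mono) (use C_pos expo poly in auto)
  also have "\<dots> = ew C g1 g2 0 a c * ew C g1 g2 k c b"
    using zbr_ge_1[of a] zbr_ge_1[of c] by (simp add: ew_def P_def Q_def W_def mult_ac)
  finally show ?thesis .
qed

lemma ew_zero_right: "ew C g1 g2 k a 0 = C * exp (g1 * znorm a) * zbr a powr g2"
  using zbr_ge_1[of a] by (simp add: ew_def zdist_zero_right zbr_zero min_absorb2 flip: zbr_def)

lemma ew_zero_right_submultiplicative:
  fixes a b :: "int ^ 'd"
  assumes C: "2 powr g2 \<le> C" and "0 \<le> k" "\<bar>h1\<bar> \<le> g1" "\<bar>h2\<bar> \<le> g2"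
  shows "ew C h1 h2 k a 0 \<le> ew C g1 g2 k a b * ew C h1 h2 k b 0"
proof -
  define R where "R = max (zdist a b) 1"
  define E where "E = exp (g1 * zdist a b) * exp (h1 * znorm b)"
  have C_pos: "0 < C"
    using C by (smt (verit) powr_gt_zero)
  have "h1 * (znorm a - znorm b) \<le> \<bar>h1\<bar> * \<bar>znorm a - znorm b\<bar>"
    by (metis abs_ge_self abs_mult)
  also have "\<dots> \<le> g1 * zdist a b"
    using assms(3) abs_znorm_diff_le_zdist[of a b] by (intro mult_mono) auto
  finally have expo: "exp (h1 * znorm a) \<le> E"
    by (simp add: E_def algebra_simps flip: exp_add)
  have "zbr a powr h2 \<le> (2 * R) powr g2 * zbr b powr h2"
  proof (rule powr_le_powr_of_comparable)
    show "zbr b \<le> 2 * R * zbr a"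
      using zbr_le_2_mult_zbr[of b a] by (simp add: R_def mult_ac)
    show "zbr a \<le> 2 * R * zbr b"
      using zbr_le_2_mult_zbr[of a b] by (simp add: R_def zdist_commute[of b a] mult_ac)
  qed (use zbr_ge_1[of a] zbr_ge_1[of b] assms(4) in \<open>auto simp: R_def\<close>)
  also have "\<dots> = 2 powr g2 * R powr g2 * zbr b powr h2"
    by (simp add: R_def powr_mult)
  also have "\<dots> \<le> C * R powr g2 * zbr b powr h2"
    using C by (intro mult_right_mono) auto
  finally have poly: "zbr a powr h2 \<le> C * R powr g2 * zbr b powr h2" .
  have min_ge_1: "1 \<le> min (zbr a) (zbr b) powr k"
    using zbr_ge_1[of a] zbr_ge_1[of b] assms(2) by (simp add: ge_one_powr_ge_zero)
  have "ew C h1 h2 k a 0 = C * exp (h1 * znorm a) * zbr a powr h2"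
    by (rule ew_zero_right)
  also have "\<dots> \<le> C * E * (C * R powr g2 * zbr b powr h2)"
    by (rule mult_mono) (use C_pos expo poly in \<open>auto simp: E_def\<close>)
  also have "\<dots> \<le> C * E * (C * R powr g2 * zbr b powr h2) * min (zbr a) (zbr b) powr k"
    using C_pos mult_left_mono[OF min_ge_1, of "C * E * (C * R powr g2 * zbr b powr h2)"]
    by (simp add: E_def)
  also have "\<dots> = ew C g1 g2 k a b * ew C h1 h2 k b 0"
    unfolding ew_zero_right by (simp add: ew_def R_def E_def mult_ac)
  finally show ?thesis .
qed

theorem lemma2p1:
  fixes g2 k :: real
  assumes "g2 \<ge> 0" and "k \<ge> 0"
  shows "\<exists>C0::real. C0 \<ge> 1 \<and> (\<forall>C \<ge> C0. \<forall>g1 \<ge> 0.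
     (g2 - k \<ge> 0 \<longrightarrow>
        (\<forall>a b c :: int ^ 'd. ew C g1 g2 k a b \<le> ew C g1 g2 0 a c * ew C g1 g2 k c b))
   \<and> (\<forall>h1 h2. - g1 \<le> h1 \<and> h1 \<le> g1 \<and> - g2 \<le> h2 \<and> h2 \<le> g2 \<longrightarrow>
        (\<forall>a b :: int ^ 'd. ew C h1 h2 k a 0 \<le> ew C g1 g2 k a b * ew C h1 h2 k b 0)))"
proof (intro exI conjI allI impI)
  show "1 \<le> 2 powr (g2 + k)"
    using assms by (simp add: ge_one_powr_ge_zero)
  fix C g1 :: real
  assume C: "2 powr (g2 + k) \<le> C" and "0 \<le> g1"
  show "ew C g1 g2 k a b \<le> ew C g1 g2 0 a c * ew C g1 g2 k c b" if "0 \<le> g2 - k" for a b c :: "int ^ 'd"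
    using ew_submultiplicative C \<open>0 \<le> g1\<close> assms that by simp
  have "2 powr g2 \<le> C"
    using C assms by (smt (verit) powr_mono)
  then show "ew C h1 h2 k a 0 \<le> ew C g1 g2 k a b * ew C h1 h2 k b 0"
    if "- g1 \<le> h1 \<and> h1 \<le> g1 \<and> - g2 \<le> h2 \<and> h2 \<le> g2" for h1 h2 and a b :: "int ^ 'd"
    by (rule ew_zero_right_submultiplicative) (use assms that in \<open>auto simp: abs_le_iff\<close>)
qed

end
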